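(* Let $S=\{\rho_1=0<\rho_2<\cdots\}$ be an Arf numerical semigroup with conductor $c=\rho_r$, and for a positive integer $i$ put $p_i=c+\rho_{i+1}-1$. Then $\alpha(p_i)=i$. Moreover, if $i<r$, then $\beta(p_i)=i$ and $\#A[p_i]=2i$.
   Context: A numerical semigroup is a submonoid $S$ of $(\mathbb{N}_0,+)$ with finite complement, with elements listed increasingly. $S$ is Arf if $\rho_i+\rho_j-\rho_k\in S$ for all positive integers $i\ge j\ge k$. The conductor $c$ is the smallest integer such that all integers $\ge c$ lie in $S$, with $c=\rho_r$. For $\rho\in S$: $A[\rho]=\{p\in S:\ \rho-p\in S\}$, $\alpha(\rho)=\max\{j\ge1:\ \rho_1,\dots,\rho_j\in A[\rho]\}$ and $\beta(\rho)=\max\{j\ge1:\ \rho_1,\dots,\rho_j\in A[\rho]\ \text{and}\ 2\rho_j\le\rho\}$. *)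

theory Defs
  imports "HOL-Library.Infinite_Set"
begin

definition numerical_semigroup :: "nat set \<Rightarrow> bool" where
  "numerical_semigroup S \<longleftrightarrow> 0 \<in> S \<and> (\<forall>a\<in>S. \<forall>b\<in>S. a + b \<in> S) \<and> finite (UNIV - S)"

text \<open>rho S i is the i-th element of S listed increasingly, 1-indexed (rho S 1 = 0).\<close>
definition rho :: "nat set \<Rightarrow> nat \<Rightarrow> nat" where
  "rho S i = enumerate S (i - 1)"

definition arf :: "nat set \<Rightarrow> bool" where
  "arf S \<longleftrightarrow> (\<forall>i j k. 1 \<le> k \<and> k \<le> j \<and> j \<le> i \<longrightarrow> rho S i + rho S j - rho S k \<in> S)"

definition conductor :: "nat set \<Rightarrow> nat" where
  "conductor S = (LEAST c. \<forall>n\<ge>c. n \<in> S)"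

definition Aset :: "nat set \<Rightarrow> nat \<Rightarrow> nat set" where
  "Aset S p = {q \<in> S. q \<le> p \<and> p - q \<in> S}"

definition alpha :: "nat set \<Rightarrow> nat \<Rightarrow> nat" where
  "alpha S p = (GREATEST j. 1 \<le> j \<and> (\<forall>l\<in>{1..j}. rho S l \<in> Aset S p))"

definition beta :: "nat set \<Rightarrow> nat \<Rightarrow> nat" where
  "beta S p = (GREATEST j. 1 \<le> j \<and> (\<forall>l\<in>{1..j}. rho S l \<in> Aset S p) \<and> 2 * rho S j \<le> p)"

end

theory Submission
  imports Defs
begin

text \<open>
  Write \<open>c\<close> for the conductor and \<open>p = c + \<rho>\<^bsub>i+1\<^esub> - 1\<close>. For \<open>l \<le> i\<close> we have
  \<open>p - \<rho>\<^sub>l \<ge> c\<close>, so \<open>\<rho>\<^sub>1, \<dots>, \<rho>\<^sub>i\<close> lie in \<open>A[p]\<close>, whereas \<open>p - \<rho>\<^bsub>i+1\<^esub> = c - 1\<close> is a gap;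
  hence \<open>\<alpha>(p) = i\<close>. If \<open>q\<close> and \<open>p - q\<close> were both elements of \<open>S\<close> at least \<open>\<rho>\<^bsub>i+1\<^esub>\<close>,
  the Arf property would put \<open>q + (p - q) - \<rho>\<^bsub>i+1\<^esub> = c - 1\<close> into \<open>S\<close>. So \<open>A[p]\<close> consists
  of the \<open>\<rho>\<^sub>l\<close> and the \<open>p - \<rho>\<^sub>l\<close> with \<open>l \<le> i\<close>; when \<open>\<rho>\<^sub>i < c\<close> these two families are
  separated by \<open>c\<close>, giving \<open>#A[p] = 2i\<close>.
\<close>

lemma Aset_diff_mem: "q \<in> Aset S p \<Longrightarrow> p - q \<in> Aset S p"
  unfolding Aset_def by auto

context
  fixes S :: "nat set"
  assumes semigroup: "numerical_semigroup S"
begin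

lemma numerical_semigroup_infinite: "infinite S"
  using semigroup unfolding numerical_semigroup_def
  by (metis Diff_infinite_finite infinite_UNIV_nat)

lemma rho_in: "rho S k \<in> S"
  unfolding rho_def by (simp add: enumerate_in_set numerical_semigroup_infinite)

lemma rho_less_iff: "1 \<le> a \<Longrightarrow> 1 \<le> b \<Longrightarrow> rho S a < rho S b \<longleftrightarrow> a < b"
  unfolding rho_def using numerical_semigroup_infinite by auto

lemma rho_le_iff: "1 \<le> a \<Longrightarrow> 1 \<le> b \<Longrightarrow> rho S a \<le> rho S b \<longleftrightarrow> a \<le> b"
  unfolding rho_def using numerical_semigroup_infinite by auto

lemma rho_inj_on: "inj_on (rho S) {1..n}"
  by (rule inj_onI) (metis atLeastAtMost_iff nat_neq_iff rho_less_iff)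

lemma ex_rho_eq: "s \<in> S \<Longrightarrow> \<exists>k\<ge>1. rho S k = s"
  unfolding rho_def using enumerate_Ex[OF numerical_semigroup_infinite]
  by (metis diff_Suc_1 le_add1 plus_1_eq_Suc)

lemma ge_conductor_in:
  assumes "conductor S \<le> n"
  shows "n \<in> S"
proof -
  obtain b where "\<forall>x\<in>UNIV - S. x < b"
    using semigroup unfolding numerical_semigroup_def by (metis finite_nat_set_iff_bounded)
  then have "\<exists>c. \<forall>n\<ge>c. n \<in> S"
    by (meson DiffI UNIV_I leD)
  then have "\<forall>n\<ge>conductor S. n \<in> S"
    unfolding conductor_def by (rule LeastI_ex)
  then show ?thesis using assms by blast
qed

lemma conductor_minus_one_notin:
  assumes "1 \<le> conductor S"
  shows "conductor S - 1 \<notin> S"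
proof
  assume "conductor S - 1 \<in> S"
  moreover have "n = conductor S - 1 \<or> conductor S \<le> n" if "conductor S - 1 \<le> n" for n
    using that by linarith
  ultimately have "\<forall>n\<ge>conductor S - 1. n \<in> S"
    using ge_conductor_in by blast
  then have "conductor S \<le> conductor S - 1"
    unfolding conductor_def by (rule Least_le)
  then show False using assms by linarith
qed

lemma rho_in_Aset_shift:
  assumes "1 \<le> l" "l \<le> i"
  shows "rho S l \<in> Aset S (conductor S + rho S (i + 1) - 1)"
proof -
  have "rho S l < rho S (i + 1)"
    using rho_less_iff assms by simp
  then show ?thesis
    unfolding Aset_def using rho_in ge_conductor_in by simp
qed

lemma rho_Suc_notin_Aset_shift:
  assumes "1 \<le> i"
  shows "rho S (i + 1) \<notin> Aset S (conductor S + rho S (i + 1) - 1)"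
proof (cases "conductor S = 0")
  case True
  have "0 < rho S (i + 1)"
    using rho_less_iff[of i "i + 1"] assms by simp
  then show ?thesis unfolding Aset_def True by auto
next
  case False
  then show ?thesis unfolding Aset_def using conductor_minus_one_notin by simp
qed

lemma arf_add_diff_in:
  assumes "arf S" "1 \<le> k" "k \<le> a" "k \<le> b"
  shows "rho S a + rho S b - rho S k \<in> S"
proof (cases "b \<le> a")
  case True
  then show ?thesis using assms unfolding arf_def by blast
next
  case False
  then have "rho S b + rho S a - rho S k \<in> S" using assms unfolding arf_def by simp
  then show ?thesis by (simp add: add.commute)
qed

lemma Aset_shift_eq:
  fixes i :: nat
  assumes "arf S" "1 \<le> conductor S"
  defines "p \<equiv> conductor S + rho S (i + 1) - 1"
  shows "Aset S p = rho S ` {1..i} \<union> (\<lambda>l. p - rho S l) ` {1..i}"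
proof
  have "rho S l \<in> Aset S p" if "l \<in> {1..i}" for l
    using rho_in_Aset_shift that unfolding p_def by simp
  then show "rho S ` {1..i} \<union> (\<lambda>l. p - rho S l) ` {1..i} \<subseteq> Aset S p"
    using Aset_diff_mem by blast
next
  show "Aset S p \<subseteq> rho S ` {1..i} \<union> (\<lambda>l. p - rho S l) ` {1..i}"
  proof
    fix q
    assume "q \<in> Aset S p"
    then have "q \<in> S" "p - q \<in> S" "q \<le> p" unfolding Aset_def by auto
    obtain a where a: "1 \<le> a" "rho S a = q" using ex_rho_eq[OF \<open>q \<in> S\<close>] by auto
    obtain b where b: "1 \<le> b" "rho S b = p - q" using ex_rho_eq[OF \<open>p - q \<in> S\<close>] by auto
    have "a \<le> i \<or> b \<le> i"
    proof (rule ccontr)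
      assume "\<not> (a \<le> i \<or> b \<le> i)"
      then have "rho S a + rho S b - rho S (i + 1) \<in> S"
        using arf_add_diff_in[OF assms(1)] by simp
      moreover have "rho S a + rho S b - rho S (i + 1) = conductor S - 1"
        using a b \<open>q \<le> p\<close> unfolding p_def by simp
      ultimately show False using conductor_minus_one_notin assms(2) by simp
    qed
    moreover have "q = p - rho S b" using b \<open>q \<le> p\<close> by simp
    ultimately show "q \<in> rho S ` {1..i} \<union> (\<lambda>l. p - rho S l) ` {1..i}"
      using a(1) b(1) unfolding a(2)[symmetric] by fastforce
  qed
qed

lemma card_Aset_shift:
  assumes "arf S" "rho S i < conductor S"
  shows "card (Aset S (conductor S + rho S (i + 1) - 1)) = 2 * i"
proof -
  define p where "p = conductor S + rho S (i + 1) - 1"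
  have below: "rho S l < conductor S" if "l \<in> {1..i}" for l
    using rho_le_iff[of l i] that assms(2) by auto
  have above: "conductor S \<le> p - rho S l" if "l \<in> {1..i}" for l
    using rho_less_iff[of l "i + 1"] that unfolding p_def by auto
  have "inj_on (\<lambda>l. p - rho S l) {1..i}"
  proof (rule inj_onI)
    fix x y
    assume "x \<in> {1..i}" "y \<in> {1..i}" "p - rho S x = p - rho S y"
    moreover have "rho S x \<le> p" "rho S y \<le> p"
      using below above \<open>x \<in> {1..i}\<close> \<open>y \<in> {1..i}\<close> by fastforce+
    ultimately have "rho S x = rho S y" by linarith
    then show "x = y" using inj_onD[OF rho_inj_on] \<open>x \<in> {1..i}\<close> \<open>y \<in> {1..i}\<close> by blast
  qed
  moreover have "rho S ` {1..i} \<inter> (\<lambda>l. p - rho S l) ` {1..i} = {}"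
    using below above by fastforce
  moreover have "1 \<le> conductor S" using assms(2) by linarith
  ultimately show ?thesis
    using Aset_shift_eq[OF assms(1)] rho_inj_on
    by (simp add: p_def card_Un_disjoint card_image)
qed

end

lemma alpha_eqI:
  assumes "1 \<le> i" "\<forall>l\<in>{1..i}. rho S l \<in> Aset S p" "rho S (i + 1) \<notin> Aset S p"
  shows "alpha S p = i"
  unfolding alpha_def
proof (rule Greatest_equality)
  show "1 \<le> i \<and> (\<forall>l\<in>{1..i}. rho S l \<in> Aset S p)" using assms(1,2) by blast
next
  show "j \<le> i" if "1 \<le> j \<and> (\<forall>l\<in>{1..j}. rho S l \<in> Aset S p)" for j
  proof (rule ccontr)
    assume "\<not> j \<le> i"
    then have "i + 1 \<in> {1..j}" by simp
    then show False using that assms(3) by blast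
  qed
qed

lemma beta_eqI:
  assumes "1 \<le> i" "\<forall>l\<in>{1..i}. rho S l \<in> Aset S p" "rho S (i + 1) \<notin> Aset S p"
    and "2 * rho S i \<le> p"
  shows "beta S p = i"
  unfolding beta_def
proof (rule Greatest_equality)
  show "1 \<le> i \<and> (\<forall>l\<in>{1..i}. rho S l \<in> Aset S p) \<and> 2 * rho S i \<le> p" using assms by blast
next
  show "j \<le> i" if "1 \<le> j \<and> (\<forall>l\<in>{1..j}. rho S l \<in> Aset S p) \<and> 2 * rho S j \<le> p" for j
  proof (rule ccontr)
    assume "\<not> j \<le> i"
    then have "i + 1 \<in> {1..j}" by simp
    then show False using that assms(3) by blast
  qed
qed

theorem mainTheorem7:
  fixes S :: "nat set" and r i :: nat
  assumes "numerical_semigroup S" and "arf S"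
    and "1 \<le> r" and "rho S r = conductor S"
    and "1 \<le> i"
  shows "alpha S (conductor S + rho S (i + 1) - 1) = i
       \<and> (i < r \<longrightarrow> beta S (conductor S + rho S (i + 1) - 1) = i
                    \<and> card (Aset S (conductor S + rho S (i + 1) - 1)) = 2 * i)"
proof -
  define p where "p = conductor S + rho S (i + 1) - 1"
  have initial: "\<forall>l\<in>{1..i}. rho S l \<in> Aset S p"
    using rho_in_Aset_shift[OF assms(1)] unfolding p_def by simp
  have next_out: "rho S (i + 1) \<notin> Aset S p"
    using rho_Suc_notin_Aset_shift[OF assms(1,5)] unfolding p_def .
  have "beta S p = i \<and> card (Aset S p) = 2 * i" if "i < r"
  proof -
    have "rho S i < conductor S"
      using rho_less_iff[OF assms(1), of i r] assms(4,5) that by simp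
    moreover have "rho S i < rho S (i + 1)"
      using rho_less_iff[OF assms(1)] assms(5) by simp
    ultimately show ?thesis
      using beta_eqI[OF assms(5) initial next_out] card_Aset_shift[OF assms(1,2)]
      unfolding p_def by simp
  qed
  then show ?thesis
    using alpha_eqI[OF assms(5) initial next_out] unfolding p_def by blast
qed

end
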